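(* Let $\mathcal L\subseteq\mathcal A^*$ be a language. (1) For all $n_2\ge n_1$, $\mathfrak s\in\{\ell,r\}$ and $w'\in\mathcal L^{\mathfrak s}_{n_2}$, the word $w=w'_{[1,n_1]}$ (if $\mathfrak s=\ell$), resp. $w=w'_{[n_2-n_1+1,n_2]}$ (if $\mathfrak s=r$), is $\mathfrak s$-special. Assume now in addition that $\mathcal L$ satisfies RBC with constant $n_0$ (every bispecial word of length $\ge n_0$ is regular bispecial). (2) For all $n_2\ge n_1\ge n_0$, $\mathfrak s\in\{\ell,r\}$ and $w\in\mathcal L^{\mathfrak s}_{n_1}$, there is a unique $w'\in\mathcal L^{\mathfrak s}_{n_2}$ with $w=w'_{[1,n_1]}$ if $\mathfrak s=\ell$, resp. $w=w'_{[n_2-n_1+1,n_2]}$ if $\mathfrak s=r$. (3) There is $N$ such that for all $n_2\ge n_1\ge N$ and $\mathfrak s\in\{\ell,r\}$, any $w'\in\mathcal L^{\mathfrak s}_{n_1}$ and $w''\in\mathcal L^{\mathfrak s}_{n_2}$ with $w'_{[1,n_0]}=w''_{[1,n_0]}$ (if $\mathfrak s=\ell$), resp. $w'_{[n_1-n_0+1,n_1]}=w''_{[n_2-n_0+1,n_2]}$ (if $\mathfrak s=r$), satisfy $Ex^{\mathfrak s}(w')=Ex^{\mathfrak s}(w'')$.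
   Context: $\mathcal{A}$ is a finite alphabet, $\mathcal{A}^*$ the set of nonempty finite words, $w_{[i,j]}=w_i\cdots w_j$. A language is a set $\mathcal L\subseteq\mathcal A^*$ with $\mathcal A\subseteq\mathcal L$, closed under taking subwords, and such that for every $w\in\mathcal L$ there are $a,b\in\mathcal A$ with $awb\in\mathcal L$. $\mathcal L_n$ = words of length $n$ in $\mathcal L$. $Ex^\ell(w)=\{a: aw\in\mathcal L\}$, $Ex^r(w)=\{b: wb\in\mathcal L\}$; $w$ is $\ell$-special (left special) if $|Ex^\ell(w)|\ge2$, $r$-special (right special) if $|Ex^r(w)|\ge2$, bispecial if both; $\mathcal L_n^{\mathfrak s}$ is the set of $\mathfrak s$-special words of length $n$. A bispecial $w$ is regular bispecial if there is exactly one $\hat a\in Ex^\ell(w)$ with $\hat aw$ right special and exactly one $\hat b\in Ex^r(w)$ with $w\hat b$ left special. $\mathcal L$ satisfies RBC (regular bispecial condition) if for some $n_0$ every bispecial word of length $\ge n_0$ is regular bispecial. *)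

theory Defs
  imports Main
begin

text \<open>Words over a finite alphabet (the type 'a) are lists; the empty list is not a word
  of the language. w_[i,j] is modelled via take/drop.\<close>

definition is_subword :: "'a list \<Rightarrow> 'a list \<Rightarrow> bool" where
  "is_subword u w \<longleftrightarrow> u \<noteq> [] \<and> (\<exists>p s. w = p @ u @ s)"

definition is_language :: "('a::finite) list set \<Rightarrow> bool" where
  "is_language L \<longleftrightarrow>
     (\<forall>w\<in>L. w \<noteq> []) \<and>
     (\<forall>a. [a] \<in> L) \<and>
     (\<forall>w\<in>L. \<forall>u. is_subword u w \<longrightarrow> u \<in> L) \<and>
     (\<forall>w\<in>L. \<exists>a b. [a] @ w @ [b] \<in> L)"

datatype side = Lside | Rside

definition Ex_l :: "'a list set \<Rightarrow> 'a list \<Rightarrow> 'a set" where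
  "Ex_l L w = {a. a # w \<in> L}"

definition Ex_r :: "'a list set \<Rightarrow> 'a list \<Rightarrow> 'a set" where
  "Ex_r L w = {b. w @ [b] \<in> L}"

fun Ext :: "'a list set \<Rightarrow> side \<Rightarrow> 'a list \<Rightarrow> 'a set" where
  "Ext L Lside w = Ex_l L w"
| "Ext L Rside w = Ex_r L w"

definition special :: "'a list set \<Rightarrow> side \<Rightarrow> 'a list \<Rightarrow> bool" where
  "special L s w \<longleftrightarrow> w \<in> L \<and> card (Ext L s w) \<ge> 2"

definition bispecial :: "'a list set \<Rightarrow> 'a list \<Rightarrow> bool" where
  "bispecial L w \<longleftrightarrow> special L Lside w \<and> special L Rside w"

definition regular_bispecial :: "'a list set \<Rightarrow> 'a list \<Rightarrow> bool" where
  "regular_bispecial L w \<longleftrightarrow> bispecial L w \<and>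
     (\<exists>!a. a \<in> Ex_l L w \<and> special L Rside (a # w)) \<and>
     (\<exists>!b. b \<in> Ex_r L w \<and> special L Lside (w @ [b]))"

definition RBC_with :: "'a list set \<Rightarrow> nat \<Rightarrow> bool" where
  "RBC_with L n0 \<longleftrightarrow> (\<forall>w. bispecial L w \<and> length w \<ge> n0 \<longrightarrow> regular_bispecial L w)"

text \<open>cut Lside n w = w_[1,n]; cut Rside n w = w_[|w|-n+1,|w|].\<close>
fun cut :: "side \<Rightarrow> nat \<Rightarrow> 'a list \<Rightarrow> 'a list" where
  "cut Lside n w = take n w"
| "cut Rside n w = drop (length w - n) w"

end

theory Submission
  imports Defs
begin

text \<open>By symmetry (reversing all words swaps left and right) it suffices to treat left special
  words. Their prefixes are left special because extensions of a word restrict to its prefixes.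
  Under RBC a left special word \<open>w\<close> of length \<open>\<ge> n0\<close> has exactly one letter \<open>b\<close> with \<open>wb\<close>
  left special: if \<open>w\<close> is bispecial this is regularity, otherwise \<open>w\<close> has a single right
  extension \<open>b\<close>, so every left extension of \<open>w\<close> is also one of \<open>wb\<close>. Hence the left special
  words extending a fixed left special word of length \<open>\<ge> n0\<close> form a single chain, along which
  the left extension sets decrease; a word of minimal left valence on each of the finitely many
  chains gives the uniform bound \<open>N\<close>.\<close>

lemma language_infix:
  assumes "is_language L" "p @ u @ s \<in> L" "u \<noteq> []"
  shows "u \<in> L"
  using assms unfolding is_language_def is_subword_def by blast

lemma language_snoc_ex:
  assumes "is_language L" "w \<in> L"
  obtains b where "w @ [b] \<in> L"
proof -
  obtain a b where "[a] @ w @ [b] \<in> L"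
    using assms unfolding is_language_def by blast
  then show thesis
    using language_infix[OF assms(1), of "[a]" "w @ [b]" "[]"] that by simp
qed

lemma Ex_l_append_subset:
  assumes "is_language L" "v \<noteq> []"
  shows "Ex_l L (v @ u) \<subseteq> Ex_l L v"
  using language_infix[OF assms(1), of "[]" _ u] assms(2) by (auto simp: Ex_l_def)

lemma special_Lside_append:
  assumes "is_language L" "special L Lside (v @ u)" "v \<noteq> []"
  shows "special L Lside v"
proof -
  have "v \<in> L"
    using language_infix[OF assms(1), of "[]" v u] assms by (simp add: special_def)
  moreover have "card (Ex_l L (v @ u)) \<le> card (Ex_l L v)"
    using card_mono[OF finite Ex_l_append_subset[OF assms(1,3)]] .
  ultimately show ?thesis
    using assms(2) by (simp add: special_def)
qed

lemma special_Lside_take: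
  assumes "is_language L" "special L Lside w" "0 < n"
  shows "special L Lside (take n w)"
proof -
  have "w \<noteq> []"
    using assms(1,2) unfolding is_language_def special_def by blast
  then show ?thesis
    using special_Lside_append[OF assms(1), of "take n w" "drop n w"] assms(2,3) by simp
qed

lemma special_RsideI:
  fixes L :: "'a::finite list set"
  assumes "w \<in> L" "w @ [b] \<in> L" "w @ [c] \<in> L" "b \<noteq> c"
  shows "special L Rside w"
proof -
  have "card {b, c} \<le> card (Ex_r L w)"
    using assms(2,3) by (intro card_mono) (auto simp: Ex_r_def)
  then show ?thesis
    using assms(1,4) by (simp add: special_def)
qed

lemma special_Lside_snoc_ex1:
  assumes lang: "is_language L" and rbc: "RBC_with L n0"
    and len: "n0 \<le> length w" and sp: "special L Lside w"
  shows "\<exists>!b. special L Lside (w @ [b])"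
proof (cases "special L Rside w")
  case True
  then have "regular_bispecial L w"
    using rbc len sp by (simp add: RBC_with_def bispecial_def)
  then show ?thesis
    by (auto simp: regular_bispecial_def special_def Ex_r_def)
next
  case False
  have w: "w \<in> L"
    using sp by (simp add: special_def)
  obtain b where b: "w @ [b] \<in> L"
    using language_snoc_ex[OF lang w] .
  have only_b: "c = b" if "w @ [c] \<in> L" for c
    using special_RsideI[OF w that b] False by blast
  have "Ex_l L w \<subseteq> Ex_l L (w @ [b])"
  proof
    fix a
    assume "a \<in> Ex_l L w"
    then obtain c where c: "a # w @ [c] \<in> L"
      using language_snoc_ex[OF lang, of "a # w"] by (auto simp: Ex_l_def)
    then have "w @ [c] \<in> L"
      using language_infix[OF lang, of "[a]" "w @ [c]" "[]"] by simp
    with c show "a \<in> Ex_l L (w @ [b])"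
      using only_b by (auto simp: Ex_l_def)
  qed
  then have "card (Ex_l L w) \<le> card (Ex_l L (w @ [b]))"
    by (simp add: card_mono)
  then have "special L Lside (w @ [b])"
    using sp b by (simp add: special_def)
  moreover have "c = b" if "special L Lside (w @ [c])" for c
    using that only_b by (simp add: special_def)
  ultimately show ?thesis
    by blast
qed

lemma special_Lside_extension_ex:
  assumes lang: "is_language L" and rbc: "RBC_with L n0"
    and len: "n0 \<le> length w" and sp: "special L Lside w"
  shows "\<exists>w'. special L Lside w' \<and> length w' = length w + m \<and> take (length w) w' = w"
proof (induction m)
  case 0
  show ?case
    using sp by auto
next
  case (Suc m)
  then obtain v where v: "special L Lside v" "length v = length w + m" "take (length w) v = w"
    by blast
  moreover obtain b where "special L Lside (v @ [b])"
    using special_Lside_snoc_ex1[OF lang rbc _ v(1)] v(2) len by fastforce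
  ultimately show ?case
    by (intro exI[of _ "v @ [b]"]) simp
qed

lemma special_Lside_eq_if_take_eq:
  assumes lang: "is_language L" and rbc: "RBC_with L n0" and n: "n0 \<le> n" "0 < n"
  shows "\<lbrakk>special L Lside v; special L Lside w; length v = length w; n \<le> length v;
    take n v = take n w\<rbrakk> \<Longrightarrow> v = w"
proof (induction v arbitrary: w rule: rev_induct)
  case Nil
  then show ?case
    using n by simp
next
  case (snoc x v)
  obtain w' y where w: "w = w' @ [y]"
    using snoc.prems(3) by (cases w rule: rev_cases) auto
  show ?case
  proof (cases "n = length (v @ [x])")
    case True
    then show ?thesis
      using snoc.prems(3,5) by simp
  next
    case False
    then have nv: "n \<le> length v"
      using snoc.prems(4) by simp
    have ne: "v \<noteq> []" "w' \<noteq> []"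
      using nv n(2) snoc.prems(3) w by auto
    have sv: "special L Lside v"
      using special_Lside_append[OF lang, of v "[x]"] snoc.prems(1) ne(1) by simp
    have sw: "special L Lside w'"
      using special_Lside_append[OF lang, of w' "[y]"] snoc.prems(2) w ne(2) by simp
    have "take n v = take n w'"
      using snoc.prems(3,5) w nv by simp
    then have "v = w'"
      using snoc.IH[OF sv sw] nv snoc.prems(3) w by simp
    moreover have "x = y"
    proof -
      have "\<exists>!b. special L Lside (v @ [b])"
        using special_Lside_snoc_ex1[OF lang rbc _ sv] nv n(1) by simp
      then show ?thesis
        using snoc.prems(1,2) w \<open>v = w'\<close> by blast
    qed
    ultimately show ?thesis
      using w by simp
  qed
qed

lemma special_Lside_prefix_if_take_eq:
  assumes lang: "is_language L" and rbc: "RBC_with L n0" and n: "n0 \<le> n" "0 < n"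
    and sp: "special L Lside v" "special L Lside w"
    and len: "n \<le> length v" "length v \<le> length w" and pre: "take n v = take n w"
  shows "take (length v) w = v"
proof (rule special_Lside_eq_if_take_eq[OF lang rbc n])
  show "special L Lside (take (length v) w)"
    using special_Lside_take[OF lang sp(2), of "length v"] n(2) len(1) by linarith
  show "take n (take (length v) w) = take n v"
    using pre len(1) by (simp add: min_def)
qed (use sp len in auto)

lemma special_Lside_extension_ex1:
  assumes lang: "is_language L" and rbc: "RBC_with L n0"
    and n: "n0 \<le> n1" "0 < n1" "n1 \<le> n2" and sp: "special L Lside w" and len: "length w = n1"
  shows "\<exists>!w'. special L Lside w' \<and> length w' = n2 \<and> take n1 w' = w"
proof (rule ex_ex1I)
  show "\<exists>w'. special L Lside w' \<and> length w' = n2 \<and> take n1 w' = w"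
    using special_Lside_extension_ex[OF lang rbc _ sp, of "n2 - n1"] n len by auto
next
  fix v v'
  assume "special L Lside v \<and> length v = n2 \<and> take n1 v = w"
    "special L Lside v' \<and> length v' = n2 \<and> take n1 v' = w"
  then show "v = v'"
    using special_Lside_eq_if_take_eq[OF lang rbc n(1,2), of v v'] n by auto
qed

lemma eventually_Ex_l_stable_prefix:
  assumes lang: "is_language L" and rbc: "RBC_with L n0" and n0: "0 < n0"
  shows "eventually (\<lambda>n1. \<forall>w' w''. n1 \<le> length w' \<and> length w' \<le> length w''
    \<and> special L Lside w' \<and> special L Lside w'' \<and> take n0 w' = u \<and> take n0 w'' = u
    \<longrightarrow> Ex_l L w' = Ex_l L w'') sequentially"
  (is "eventually (\<lambda>n1. \<forall>w' w''. ?stable n1 w' w'') _")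
proof -
  define P where "P w \<longleftrightarrow> special L Lside w \<and> n0 \<le> length w \<and> take n0 w = u" for w
  show ?thesis
  proof (cases "\<exists>w. P w")
    case False
    then have stable: "?stable n1 w' w''" if "n0 \<le> n1" for n1 w' w''
      using that by (auto simp: P_def)
    show ?thesis
      by (rule eventually_sequentiallyI[of n0]) (intro allI stable)
  next
    case True
    then obtain w1 where "P w1"
      by blast
    then obtain w0 where w0: "P w0" and min: "\<forall>w. P w \<longrightarrow> card (Ex_l L w0) \<le> card (Ex_l L w)"
      using ex_has_least_nat[of P w1 "\<lambda>w. card (Ex_l L w)"] by blast
    have stable: "?stable n1 w' w''" if "length w0 \<le> n1" for n1 w' w''
    proof
      assume a: "n1 \<le> length w' \<and> length w' \<le> length w''
        \<and> special L Lside w' \<and> special L Lside w'' \<and> take n0 w' = u \<and> take n0 w'' = u"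
      then have le: "length w0 \<le> length w'"
        using that by simp
      have "take (length w0) w' = w0" "take (length w') w'' = w'"
        using special_Lside_prefix_if_take_eq[OF lang rbc order_refl n0] w0 a le by (auto simp: P_def)
      then have "w0 @ drop (length w0) w' = w'" "w' @ drop (length w') w'' = w''"
        using append_take_drop_id[of "length w0" w'] append_take_drop_id[of "length w'" w''] by simp_all
      moreover have "w0 \<noteq> []" "w' \<noteq> []"
        using w0 le n0 by (auto simp: P_def)
      ultimately have sub: "Ex_l L w'' \<subseteq> Ex_l L w'" "Ex_l L w' \<subseteq> Ex_l L w0"
        using Ex_l_append_subset[OF lang, of w0 "drop (length w0) w'"]
          Ex_l_append_subset[OF lang, of w' "drop (length w') w''"] by simp_all
      have "card (Ex_l L w0) \<le> card (Ex_l L w'')"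
        using min a le w0 by (auto simp: P_def)
      then have "card (Ex_l L w') \<le> card (Ex_l L w'')"
        using card_mono[OF finite sub(2)] by linarith
      then show "Ex_l L w' = Ex_l L w''"
        using card_seteq[OF finite sub(1)] by simp
    qed
    show ?thesis
      by (rule eventually_sequentiallyI[of "length w0"]) (intro allI stable)
  qed
qed

lemma eventually_Ex_l_stable:
  assumes lang: "is_language L" and rbc: "RBC_with L n0" and n0: "0 < n0"
  shows "eventually (\<lambda>n1. \<forall>w' w''. n1 \<le> length w' \<and> length w' \<le> length w''
    \<and> special L Lside w' \<and> special L Lside w'' \<and> take n0 w' = take n0 w''
    \<longrightarrow> Ex_l L w' = Ex_l L w'') sequentially"
proof -
  have "finite {u :: 'a list. length u = n0}"
    using finite_lists_length_eq[OF finite_UNIV, of n0] by simp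
  then have "eventually (\<lambda>n1. \<forall>u\<in>{u. length u = n0}. \<forall>w' w''. n1 \<le> length w'
    \<and> length w' \<le> length w'' \<and> special L Lside w' \<and> special L Lside w''
    \<and> take n0 w' = u \<and> take n0 w'' = u \<longrightarrow> Ex_l L w' = Ex_l L w'') sequentially"
    by (intro eventually_ball_finite ballI eventually_Ex_l_stable_prefix[OF assms])
  then show ?thesis
    using eventually_ge_at_top[of n0]
  proof eventually_elim
    case (elim n1)
    show ?case
    proof (intro allI impI)
      fix w' w''
      assume a: "n1 \<le> length w' \<and> length w' \<le> length w'' \<and> special L Lside w'
        \<and> special L Lside w'' \<and> take n0 w' = take n0 w''"
      then have "take n0 w' \<in> {u. length u = n0}"
        using elim(2) by simp
      moreover have "n1 \<le> length w' \<and> length w' \<le> length w'' \<and> special L Lside w'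
        \<and> special L Lside w'' \<and> take n0 w' = take n0 w' \<and> take n0 w'' = take n0 w'"
        using a by simp
      ultimately show "Ex_l L w' = Ex_l L w''"
        using elim(1) by blast
    qed
  qed
qed

lemma rev_image_iff: "w \<in> rev ` L \<longleftrightarrow> rev w \<in> L"
  by (metis image_iff rev_rev_ident)

lemma is_subword_rev: "is_subword (rev u) (rev w) \<longleftrightarrow> is_subword u w"
  unfolding is_subword_def by (metis rev_append rev_is_Nil_conv rev_rev_ident append.assoc)

lemma is_language_rev_image:
  assumes "is_language L"
  shows "is_language (rev ` L)"
  unfolding is_language_def
proof (intro conjI ballI allI impI)
  fix w
  assume "w \<in> rev ` L"
  then show "w \<noteq> []"
    using assms by (auto simp: is_language_def)
next
  fix a
  show "[a] \<in> rev ` L"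
    using assms by (simp add: is_language_def rev_image_iff)
next
  fix w u
  assume "w \<in> rev ` L" "is_subword u w"
  then show "u \<in> rev ` L"
    using assms is_subword_rev[of u w] by (auto simp: is_language_def rev_image_iff)
next
  fix w
  assume "w \<in> rev ` L"
  then obtain a b where "[a] @ rev w @ [b] \<in> L"
    using assms by (auto simp: is_language_def rev_image_iff)
  then have "[b] @ w @ [a] \<in> rev ` L"
    by (simp add: rev_image_iff)
  then show "\<exists>a b. [a] @ w @ [b] \<in> rev ` L"
    by blast
qed

lemma Ex_l_rev_image: "Ex_l (rev ` L) w = Ex_r L (rev w)"
  by (simp add: Ex_l_def Ex_r_def rev_image_iff)

lemma Ex_r_rev_image: "Ex_r (rev ` L) w = Ex_l L (rev w)"
  by (simp add: Ex_l_def Ex_r_def rev_image_iff)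

lemma special_Lside_rev_image: "special (rev ` L) Lside w \<longleftrightarrow> special L Rside (rev w)"
  by (simp add: special_def Ex_l_rev_image rev_image_iff)

lemma special_Rside_rev_image: "special (rev ` L) Rside w \<longleftrightarrow> special L Lside (rev w)"
  by (simp add: special_def Ex_r_rev_image rev_image_iff)

lemma RBC_with_rev_image:
  assumes "RBC_with L n0"
  shows "RBC_with (rev ` L) n0"
  unfolding RBC_with_def
proof (intro allI impI)
  fix w
  assume w: "bispecial (rev ` L) w \<and> n0 \<le> length w"
  then have "regular_bispecial L (rev w)"
    using assms by (simp add: RBC_with_def bispecial_def special_Lside_rev_image special_Rside_rev_image)
  then show "regular_bispecial (rev ` L) w"
    using w by (simp add: regular_bispecial_def bispecial_def Ex_l_rev_image Ex_r_rev_image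
        special_Lside_rev_image special_Rside_rev_image)
qed

lemma special_cut:
  assumes "is_language L" "special L s w" "0 < n"
  shows "special L s (cut s n w)"
proof (cases s)
  case Lside
  then show ?thesis
    using special_Lside_take assms by simp
next
  case Rside
  then show ?thesis
    using special_Lside_take[OF is_language_rev_image[OF assms(1)], of "rev w" n] assms(2,3)
    by (simp add: special_Lside_rev_image take_rev)
qed

lemma special_extension_ex1:
  assumes lang: "is_language L" and rbc: "RBC_with L n0"
    and n: "n0 \<le> n1" "0 < n1" "n1 \<le> n2" and sp: "special L s w" and len: "length w = n1"
  shows "\<exists>!w'. special L s w' \<and> length w' = n2 \<and> cut s n1 w' = w"
proof (cases s)
  case Lside
  then show ?thesis
    using special_Lside_extension_ex1[OF lang rbc n] sp len by simp
next
  case Rside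
  have "special (rev ` L) Lside (rev w)"
    using sp Rside by (simp add: special_Lside_rev_image)
  then have "\<exists>!v. special (rev ` L) Lside v \<and> length v = n2 \<and> take n1 v = rev w"
    using special_Lside_extension_ex1[OF is_language_rev_image[OF lang] RBC_with_rev_image[OF rbc] n]
      len by simp
  then have "\<exists>!w'. special (rev ` L) Lside (rev w') \<and> length (rev w') = n2
      \<and> take n1 (rev w') = rev w"
    by (metis rev_rev_ident)
  moreover have "cut Rside n1 w' = w \<longleftrightarrow> take n1 (rev w') = rev w" for w'
    by (auto simp: take_rev)
  ultimately show ?thesis
    using Rside by (simp add: special_Lside_rev_image)
qed

lemma eventually_Ext_stable:
  assumes lang: "is_language L" and rbc: "RBC_with L n0" and n0: "0 < n0"
  shows "eventually (\<lambda>n1. \<forall>n2 s w' w''. n1 \<le> n2 \<and> special L s w' \<and> length w' = n1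
    \<and> special L s w'' \<and> length w'' = n2 \<and> cut s n0 w' = cut s n0 w''
    \<longrightarrow> Ext L s w' = Ext L s w'') sequentially"
  using eventually_Ex_l_stable[OF lang rbc n0]
    eventually_Ex_l_stable[OF is_language_rev_image[OF lang] RBC_with_rev_image[OF rbc] n0]
proof eventually_elim
  case (elim n1)
  show ?case
  proof (intro allI impI)
    fix n2 s w' w''
    assume a: "n1 \<le> n2 \<and> special L s w' \<and> length w' = n1 \<and> special L s w'' \<and> length w'' = n2
      \<and> cut s n0 w' = cut s n0 w''"
    show "Ext L s w' = Ext L s w''"
    proof (cases s)
      case Lside
      then show ?thesis
        using elim(1) a by simp
    next
      case Rside
      then have "take n0 (rev w') = take n0 (rev w'')"
        using a by (auto simp: take_rev)
      then have "Ex_l (rev ` L) (rev w') = Ex_l (rev ` L) (rev w'')"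
        using elim(2) a Rside by (simp add: special_Lside_rev_image)
      then show ?thesis
        using Rside by (simp add: Ex_l_rev_image)
    qed
  qed
qed

theorem mainTheorem2:
  fixes L :: "('a::finite) list set"
  assumes "is_language L"
  shows "(\<forall>n1 n2 s w'. 1 \<le> n1 \<and> n1 \<le> n2 \<and> special L s w' \<and> length w' = n2
            \<longrightarrow> special L s (cut s n1 w'))
       \<and> (\<forall>n0. 1 \<le> n0 \<and> RBC_with L n0 \<longrightarrow>
            (\<forall>n1 n2 s w. n0 \<le> n1 \<and> n1 \<le> n2 \<and> special L s w \<and> length w = n1
               \<longrightarrow> (\<exists>!w'. special L s w' \<and> length w' = n2 \<and> cut s n1 w' = w))
          \<and> (\<exists>N. \<forall>n1 n2 s w' w''. N \<le> n1 \<and> n1 \<le> n2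
               \<and> special L s w' \<and> length w' = n1
               \<and> special L s w'' \<and> length w'' = n2
               \<and> cut s n0 w' = cut s n0 w''
               \<longrightarrow> Ext L s w' = Ext L s w''))"
proof (intro conjI allI impI)
  fix n1 n2 s w'
  assume "1 \<le> n1 \<and> n1 \<le> n2 \<and> special L s w' \<and> length w' = n2"
  then show "special L s (cut s n1 w')"
    using special_cut[OF assms] by simp
next
  fix n0 n1 n2 s w
  assume "1 \<le> n0 \<and> RBC_with L n0" "n0 \<le> n1 \<and> n1 \<le> n2 \<and> special L s w \<and> length w = n1"
  then show "\<exists>!w'. special L s w' \<and> length w' = n2 \<and> cut s n1 w' = w"
    using special_extension_ex1[OF assms, of n0 n1 n2 s w] by simp
next
  fix n0 :: nat
  assume "1 \<le> n0 \<and> RBC_with L n0"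
  then show "\<exists>N. \<forall>n1 n2 s w' w''. N \<le> n1 \<and> n1 \<le> n2
      \<and> special L s w' \<and> length w' = n1 \<and> special L s w'' \<and> length w'' = n2
      \<and> cut s n0 w' = cut s n0 w'' \<longrightarrow> Ext L s w' = Ext L s w''"
    using eventually_Ext_stable[OF assms, of n0] by (simp add: eventually_sequentially imp_conjL)
qed

end
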